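(* Let $E$ be a finite-dimensional real vector space, $E_0\subseteq E$ a real subspace, $p:E^*\to E_0^*$ the restriction map, and $\mu$ a tempered positive Borel measure on $E^*$ such that $\mu_0:=p_*\mu$ is also tempered. Then $\operatorname{supp}(\operatorname{Im}\tilde\mu_0)\subseteq\operatorname{supp}(\operatorname{Im}\tilde\mu)$, where $E_0$ is regarded as a subset of $E$.
   Context: For a tempered measure $\nu$ on the dual $F^*$ of a finite-dimensional real vector space $F$, $\tilde\nu$ is the tempered distribution on $F$ given by $\tilde\nu(\phi)=\int_{F^*}\widetilde{\overline\phi}\,d\nu$, $\tilde\psi(\lambda)=\int_Fe^{i\lambda(x)}\psi(x)dx$; $\operatorname{Im}\tilde\nu$ is the distribution with $(\operatorname{Im}\tilde\nu)(\phi)=\operatorname{Im}(\tilde\nu(\phi))$ for real-valued test functions $\phi$. *)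

theory Defs
  imports "HOL-Analysis.Analysis"
begin

text \<open>A finite-dimensional real vector space F is a type of class
euclidean_space; its dual F* is identified with F itself via the inner product
(the functional lambda acts by x maps to lambda \<bullet> x). Lebesgue measure lborel
plays the role of dx (any Haar measure; supports do not depend on the normalisation).\<close>

fun C_k :: "nat \<Rightarrow> ('a::euclidean_space \<Rightarrow> real) \<Rightarrow> bool" where
  "C_k 0 f = continuous_on UNIV f"
| "C_k (Suc k) f = (f differentiable_on UNIV \<and>
      (\<forall>v. C_k k (\<lambda>x. frechet_derivative f (at x) v)))"

definition smooth :: "('a::euclidean_space \<Rightarrow> real) \<Rightarrow> bool" where
  "smooth f \<longleftrightarrow> (\<forall>k. C_k k f)"

definition tsupport :: "('a::euclidean_space \<Rightarrow> real) \<Rightarrow> 'a set" where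
  "tsupport f = closure {x. f x \<noteq> 0}"

definition test_function :: "('a::euclidean_space \<Rightarrow> real) \<Rightarrow> bool" where
  "test_function f \<longleftrightarrow> smooth f \<and> compact (tsupport f)"

definition dist_support :: "(('a::euclidean_space \<Rightarrow> real) \<Rightarrow> real) \<Rightarrow> 'a set" where
  "dist_support T = UNIV - \<Union>{U. open U \<and>
      (\<forall>\<phi>. test_function \<phi> \<and> tsupport \<phi> \<subseteq> U \<longrightarrow> T \<phi> = 0)}"

definition tempered_measure :: "'a::euclidean_space measure \<Rightarrow> bool" where
  "tempered_measure M \<longleftrightarrow> sets M = sets borel \<and>
     (\<exists>N::nat. (\<integral>\<^sup>+ \<xi>. ennreal (1 / (1 + norm \<xi>) ^ N) \<partial>M) < \<infinity>)"

definition fourier :: "('a::euclidean_space \<Rightarrow> complex) \<Rightarrow> 'a \<Rightarrow> complex" where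
  "fourier \<psi> \<xi> = (LINT x|lborel. exp (\<i> * complex_of_real (\<xi> \<bullet> x)) * \<psi> x)"

definition meas_tilde :: "'a::euclidean_space measure \<Rightarrow> ('a \<Rightarrow> complex) \<Rightarrow> complex" where
  "meas_tilde \<nu> \<phi> = (LINT \<xi>|\<nu>. fourier (\<lambda>x. cnj (\<phi> x)) \<xi>)"

definition Im_tilde :: "'a::euclidean_space measure \<Rightarrow> ('a \<Rightarrow> real) \<Rightarrow> real" where
  "Im_tilde \<nu> \<phi> = Im (meas_tilde \<nu> (\<lambda>x. complex_of_real (\<phi> x)))"

end

theory Submission
  imports Defs "HOL-Computational_Algebra.Polynomial" "HOL-Probability.Characteristic_Functions"
begin

text \<open>Let \<open>j : E\<^sub>0 \<rightarrow> E\<close> be the inclusion, so that \<open>p = adjoint j\<close>. Suppose \<open>Im \<mu>~\<close> vanishes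
  on an open neighbourhood \<open>U\<close> of \<open>j y\<close>, and let \<open>\<phi>\<close> be a test function on \<open>E\<^sub>0\<close> supported
  in \<open>j -` U\<close>. Convolving the push-forward of \<open>\<phi> x dx\<close> under \<open>j\<close> with a mollifier \<open>\<rho>\<^sub>r\<close>
  gives test functions \<open>\<psi>\<^sub>r\<close> on \<open>E\<close>, supported in \<open>U\<close> for small \<open>r\<close>, whose Fourier transforms
  are \<open>\<psi>\<^sub>r~(\<xi>) = \<phi>~(p \<xi>) \<rho>\<^sub>r~(\<xi>)\<close>. As \<open>r \<rightarrow> 0\<close>, \<open>\<rho>\<^sub>r~ \<rightarrow> 1\<close> boundedly, so by dominated
  convergence \<open>\<mu>~(\<psi>\<^sub>r) \<rightarrow> \<mu>\<^sub>0~(\<phi>)\<close>; hence \<open>Im \<mu>\<^sub>0~(\<phi>) = 0\<close>, and \<open>y\<close> lies outside the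
  support of \<open>Im \<mu>\<^sub>0~\<close>.\<close>

subsection \<open>Smooth functions and test functions\<close>

lemma frechet_derivative_apply:
  "(f has_derivative f') (at x) \<Longrightarrow> frechet_derivative f (at x) v = f' v"
  by (metis frechet_derivative_at)

lemma linear_imp_continuous_on:
  "linear (j :: 'a::euclidean_space \<Rightarrow> 'b::real_normed_vector) \<Longrightarrow> continuous_on S j"
  by (simp add: linear_conv_bounded_linear linear_continuous_on)

lemma C_k_imp_continuous_on: "C_k k f \<Longrightarrow> continuous_on UNIV f"
  by (cases k) (auto intro: differentiable_imp_continuous_on)

lemma C_k_SucD: "C_k (Suc k) f \<Longrightarrow> C_k k f"
  by (induction k arbitrary: f) (auto intro: differentiable_imp_continuous_on)

lemma smooth_coinduct:
  assumes "P f"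
    and step: "\<And>f. P f \<Longrightarrow>
      f differentiable_on UNIV \<and> (\<forall>v. P (\<lambda>x. frechet_derivative f (at x) v))"
  shows "smooth f"
proof -
  have "\<forall>f. P f \<longrightarrow> C_k k f" for k
    using step by (induction k) (auto intro: differentiable_imp_continuous_on)
  then show ?thesis
    using assms(1) unfolding smooth_def by blast
qed

lemma smooth_imp_continuous_on: "smooth f \<Longrightarrow> continuous_on UNIV f"
  unfolding smooth_def using C_k_imp_continuous_on by blast

lemma smooth_imp_differentiable_on: "smooth f \<Longrightarrow> f differentiable_on UNIV"
  unfolding smooth_def using C_k.simps(2) by blast

lemma smooth_frechet_derivative: "smooth f \<Longrightarrow> smooth (\<lambda>x. frechet_derivative f (at x) v)"
  unfolding smooth_def using C_k.simps(2) by blast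

lemma has_derivative_frechet_derivative:
  "f differentiable_on UNIV \<Longrightarrow> (f has_derivative frechet_derivative f (at x)) (at x)"
  by (auto simp: differentiable_on_def frechet_derivative_works[symmetric])

lemma C_k_const: "C_k k (\<lambda>x. c)"
  by (induction k arbitrary: c) simp_all

lemma C_k_add: "C_k k f \<Longrightarrow> C_k k g \<Longrightarrow> C_k k (\<lambda>x. f x + g x)"
proof (induction k arbitrary: f g)
  case 0
  then show ?case by (auto intro: continuous_intros)
next
  case (Suc k)
  have df: "f differentiable_on UNIV" and dg: "g differentiable_on UNIV"
    using Suc.prems by auto
  have "(\<lambda>x. frechet_derivative (\<lambda>x. f x + g x) (at x) v) =
      (\<lambda>x. frechet_derivative f (at x) v + frechet_derivative g (at x) v)" for v
    using has_derivative_add[OF has_derivative_frechet_derivative[OF df]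
        has_derivative_frechet_derivative[OF dg]]
    by (auto dest: frechet_derivative_apply)
  then show ?case
    using Suc df dg by (auto intro: differentiable_on_add)
qed

lemma C_k_mult: "C_k k f \<Longrightarrow> C_k k g \<Longrightarrow> C_k k (\<lambda>x. f x * g x)"
proof (induction k arbitrary: f g)
  case 0
  then show ?case by (auto intro: continuous_intros)
next
  case (Suc k)
  have df: "f differentiable_on UNIV" and dg: "g differentiable_on UNIV"
    using Suc.prems by auto
  have "(\<lambda>x. frechet_derivative (\<lambda>x. f x * g x) (at x) v) =
      (\<lambda>x. f x * frechet_derivative g (at x) v + frechet_derivative f (at x) v * g x)" for v
    using has_derivative_mult[OF has_derivative_frechet_derivative[OF df]
        has_derivative_frechet_derivative[OF dg]]
    by (auto dest: frechet_derivative_apply)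
  moreover have "C_k k f" "C_k k g"
    using Suc.prems C_k_SucD by blast+
  ultimately show ?case
    using Suc df dg by (auto intro!: C_k_add differentiable_on_mult)
qed

lemma C_k_compose: "C_k k (h :: real \<Rightarrow> real) \<Longrightarrow> C_k k g \<Longrightarrow> C_k k (\<lambda>x. h (g x))"
proof (induction k arbitrary: h g)
  case 0
  then show ?case by (auto intro: continuous_on_compose2)
next
  case (Suc k)
  have dh: "h differentiable_on UNIV" and dg: "g differentiable_on UNIV"
    using Suc.prems by auto
  have "frechet_derivative (\<lambda>x. h (g x)) (at x) v =
      frechet_derivative g (at x) v * frechet_derivative h (at (g x)) 1" for x v
  proof -
    have "linear (frechet_derivative h (at (g x)))"
      using dh by (auto simp: differentiable_on_def intro: linear_frechet_derivative)
    moreover have "frechet_derivative (\<lambda>x. h (g x)) (at x) v =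
        frechet_derivative h (at (g x)) (frechet_derivative g (at x) v)"
      using diff_chain_at[OF has_derivative_frechet_derivative[OF dg]
          has_derivative_frechet_derivative[OF dh]]
      by (auto simp: o_def dest: frechet_derivative_apply)
    ultimately show ?thesis
      by (metis linear_scale mult.right_neutral real_scaleR_def)
  qed
  moreover have "C_k k g"
    using Suc.prems C_k_SucD by blast
  moreover have "C_k k (\<lambda>x. frechet_derivative h (at (g x)) 1)"
    using Suc.IH[of "\<lambda>t. frechet_derivative h (at t) 1"] Suc.prems C_k_SucD by auto
  ultimately show ?case
    using Suc dh dg
    by (auto intro!: C_k_mult differentiable_on_compose[of g UNIV h]
        intro: differentiable_on_subset)
qed

lemma smooth_const: "smooth (\<lambda>x. c)"
  unfolding smooth_def using C_k_const by blast

lemma smooth_add: "smooth f \<Longrightarrow> smooth g \<Longrightarrow> smooth (\<lambda>x. f x + g x)"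
  unfolding smooth_def using C_k_add by blast

lemma smooth_mult: "smooth f \<Longrightarrow> smooth g \<Longrightarrow> smooth (\<lambda>x. f x * g x)"
  unfolding smooth_def using C_k_mult by blast

lemma smooth_compose: "smooth (h :: real \<Rightarrow> real) \<Longrightarrow> smooth g \<Longrightarrow> smooth (\<lambda>x. h (g x))"
  unfolding smooth_def using C_k_compose by blast

lemma smooth_sum:
  "finite S \<Longrightarrow> (\<And>i. i \<in> S \<Longrightarrow> smooth (f i)) \<Longrightarrow> smooth (\<lambda>x. \<Sum>i\<in>S. f i x)"
  by (induction S rule: finite_induct) (simp_all add: smooth_const smooth_add)

lemma smooth_inner_left: "smooth (\<lambda>z::'a::euclidean_space. w \<bullet> z)"
proof (rule smooth_coinduct[where P = "\<lambda>f. (\<exists>w. f = (\<lambda>z::'a. w \<bullet> z)) \<or> (\<exists>c. f = (\<lambda>z. c))"])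
  fix f :: "'a \<Rightarrow> real"
  assume "(\<exists>w. f = (\<lambda>z. w \<bullet> z)) \<or> (\<exists>c. f = (\<lambda>z. c))"
  then show "f differentiable_on UNIV \<and> (\<forall>v. (\<exists>w. (\<lambda>x. frechet_derivative f (at x) v) =
      (\<lambda>z. w \<bullet> z)) \<or> (\<exists>c. (\<lambda>x. frechet_derivative f (at x) v) = (\<lambda>z. c)))"
  proof
    assume "\<exists>w. f = (\<lambda>z. w \<bullet> z)"
    then obtain w where f: "f = (\<lambda>z. w \<bullet> z)" by blast
    have d: "(f has_derivative (\<lambda>v. w \<bullet> v)) (at x)" for x
      unfolding f by (intro bounded_linear_imp_has_derivative bounded_linear_inner_right)
    then have "frechet_derivative f (at x) v = w \<bullet> v" for x v
      by (rule frechet_derivative_apply)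
    then show ?thesis
      using d by (auto simp: differentiable_on_def differentiable_def)
  qed auto
qed auto

lemma smooth_inner_self: "smooth (\<lambda>z::'a::euclidean_space. z \<bullet> z)"
proof -
  have "smooth (\<lambda>z::'a. \<Sum>i\<in>Basis. (i \<bullet> z) * (i \<bullet> z))"
    by (intro smooth_sum smooth_mult smooth_inner_left) auto
  then show ?thesis
    by (simp add: euclidean_inner[of z z for z] inner_commute)
qed

lemma tsupport_nonzero: "f x \<noteq> 0 \<Longrightarrow> x \<in> tsupport f"
  unfolding tsupport_def by (rule subsetD[OF closure_subset]) simp

lemma test_function_borel_measurable:
  "test_function \<phi> \<Longrightarrow> (\<lambda>x. complex_of_real (\<phi> x)) \<in> borel_measurable borel"
  unfolding test_function_def
  by (intro borel_measurable_continuous_onI continuous_intros smooth_imp_continuous_on) simp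

subsection \<open>A mollifier\<close>

text \<open>All derivatives of the classical flat function \<open>t \<mapsto> exp (-1/t)\<close> (extended by \<open>0\<close> for
  \<open>t \<le> 0\<close>) are of this form.\<close>
definition exp_inv_poly :: "real poly \<Rightarrow> real \<Rightarrow> real" where
  "exp_inv_poly p t = (if t > 0 then poly p (1/t) * exp (-(1/t)) else 0)"

lemma tendsto_poly_times_exp_neg_at_top: "((\<lambda>s. poly q s * exp (-s)) \<longlongrightarrow> (0::real)) at_top"
proof -
  have "((\<lambda>s. \<Sum>i\<le>degree q. coeff q i * (s ^ i / exp s)) \<longlongrightarrow> (\<Sum>i\<le>degree q. coeff q i * 0)) at_top"
    by (intro tendsto_sum tendsto_mult tendsto_const tendsto_power_div_exp_0)
  moreover have "(\<lambda>s. \<Sum>i\<le>degree q. coeff q i * (s ^ i / exp s)) = (\<lambda>s. poly q s * exp (-s))"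
    by (auto simp: poly_altdef sum_divide_distrib exp_minus field_simps)
  ultimately show ?thesis by simp
qed

lemma tendsto_exp_inv_poly_at_right_0:
  "((\<lambda>t. poly q (1/t) * exp (-(1/t))) \<longlongrightarrow> (0::real)) (at_right 0)"
proof -
  have "filterlim (\<lambda>t::real. 1/t) at_top (at_right 0)"
    using filterlim_inverse_at_top_right by (simp add: inverse_eq_divide)
  from filterlim_compose[OF tendsto_poly_times_exp_neg_at_top this] show ?thesis
    by (simp add: o_def)
qed

lemma exp_inv_poly_has_real_derivative_pos:
  assumes "t > 0"
  shows "(exp_inv_poly p has_real_derivative exp_inv_poly ([:0,0,1:] * (p - pderiv p)) t) (at t)"
proof -
  have i: "((\<lambda>t. inverse t) has_real_derivative - (inverse t ^ 2)) (at t)"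
    using assms by (auto intro!: derivative_eq_intros simp: power2_eq_square)
  have "((\<lambda>t. poly p (inverse t) * exp (- inverse t)) has_real_derivative
      poly p (inverse t) * (exp (- inverse t) * (inverse t ^ 2)) +
      poly (pderiv p) (inverse t) * (- (inverse t ^ 2)) * exp (- inverse t)) (at t)"
    using DERIV_mult'[OF DERIV_chain2[OF poly_DERIV i] DERIV_chain2[OF DERIV_exp DERIV_minus[OF i]]]
    by simp
  moreover have "poly p (inverse t) * (exp (- inverse t) * (inverse t ^ 2)) +
      poly (pderiv p) (inverse t) * (- (inverse t ^ 2)) * exp (- inverse t)
      = exp_inv_poly ([:0,0,1:] * (p - pderiv p)) t"
    using assms
    by (simp add: exp_inv_poly_def poly_diff algebra_simps power2_eq_square inverse_eq_divide)
  ultimately show ?thesis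
    using assms
    by (auto intro: has_field_derivative_transform_within_open[where S = "{0<..}"]
        simp: exp_inv_poly_def inverse_eq_divide)
qed

lemma exp_inv_poly_has_real_derivative:
  "(exp_inv_poly p has_real_derivative exp_inv_poly ([:0,0,1:] * (p - pderiv p)) t) (at t)"
proof (cases t "0::real" rule: linorder_cases)
  case less
  have "((\<lambda>t. 0) has_real_derivative 0) (at t)"
    by simp
  then have "(exp_inv_poly p has_real_derivative 0) (at t)"
    by (rule has_field_derivative_transform_within_open[where S = "{..<0}"])
      (use less in \<open>auto simp: exp_inv_poly_def\<close>)
  then show ?thesis
    using less by (simp add: exp_inv_poly_def)
next
  case equal
  have "((\<lambda>y. (exp_inv_poly p y - exp_inv_poly p 0) / (y - 0)) \<longlongrightarrow> 0) (at (0::real))"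
  proof (rule filterlim_split_at)
    have "eventually (\<lambda>y. 0 = (exp_inv_poly p y - exp_inv_poly p 0) / (y - 0)) (at_left (0::real))"
      unfolding eventually_at_left_field by (auto intro!: exI[of _ "-1"] simp: exp_inv_poly_def)
    then show "((\<lambda>y. (exp_inv_poly p y - exp_inv_poly p 0) / (y - 0)) \<longlongrightarrow> 0) (at_left 0)"
      by (rule Lim_transform_eventually[rotated]) simp
  next
    have "eventually (\<lambda>y. poly (pCons 0 p) (1/y) * exp (-(1/y)) =
        (exp_inv_poly p y - exp_inv_poly p 0) / (y - 0)) (at_right (0::real))"
      unfolding eventually_at_right_field by (auto intro!: exI[of _ 1] simp: exp_inv_poly_def)
    then show "((\<lambda>y. (exp_inv_poly p y - exp_inv_poly p 0) / (y - 0)) \<longlongrightarrow> 0) (at_right 0)"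
      by (rule Lim_transform_eventually[OF tendsto_exp_inv_poly_at_right_0])
  qed
  then show ?thesis
    using equal by (simp add: has_field_derivative_iff exp_inv_poly_def)
next
  case greater
  then show ?thesis
    by (rule exp_inv_poly_has_real_derivative_pos)
qed

lemma smooth_exp_inv_poly: "smooth (exp_inv_poly p)"
proof (rule smooth_coinduct[where P = "\<lambda>f. \<exists>p. f = exp_inv_poly p"])
  fix f :: "real \<Rightarrow> real"
  assume "\<exists>p. f = exp_inv_poly p"
  then obtain p where f: "f = exp_inv_poly p" by blast
  let ?q = "[:0,0,1:] * (p - pderiv p)"
  have d: "(f has_derivative (\<lambda>v. exp_inv_poly ?q t * v)) (at t)" for t
    using exp_inv_poly_has_real_derivative[of p t] unfolding f has_field_derivative_def by simp
  have "frechet_derivative f (at t) v = exp_inv_poly (smult v ?q) t" for t v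
    using frechet_derivative_apply[OF d] by (simp add: exp_inv_poly_def)
  then show "f differentiable_on UNIV \<and>
      (\<forall>v. \<exists>p. (\<lambda>x. frechet_derivative f (at x) v) = exp_inv_poly p)"
    using d by (auto simp: differentiable_on_def differentiable_def)
qed auto

definition bump :: "real \<Rightarrow> 'a::euclidean_space \<Rightarrow> real" where
  "bump r z = exp_inv_poly 1 (r^2 - z \<bullet> z)"

lemma smooth_bump: "smooth (bump r)"
proof -
  have "smooth (\<lambda>z::'a. r^2 + (-1) * (z \<bullet> z))"
    by (intro smooth_add smooth_mult smooth_const smooth_inner_self)
  from smooth_compose[OF smooth_exp_inv_poly this, of 1] show ?thesis
    unfolding bump_def by simp
qed

lemma bump_nonneg: "bump r z \<ge> 0"
  by (simp add: bump_def exp_inv_poly_def)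

lemma bump_eq_0: "0 \<le> r \<Longrightarrow> r \<le> norm z \<Longrightarrow> bump r z = 0"
  using power_mono[of r "norm z" 2] by (simp add: bump_def exp_inv_poly_def power2_norm_eq_inner)

lemma bump_lower_bound:
  assumes r: "0 < r" and z: "norm z < r/2"
  shows "exp (- (1 / (3/4 * r^2))) \<le> bump r z"
proof -
  have "(norm z)^2 \<le> (r/2)^2"
    using z by (simp add: power_mono)
  then have le: "3/4 * r^2 \<le> r^2 - z \<bullet> z"
    by (simp add: power2_norm_eq_inner power_divide)
  have pos: "0 < 3/4 * r^2"
    using r by simp
  with le have pos': "0 < r^2 - z \<bullet> z"
    by linarith
  moreover have "1 / (r^2 - z \<bullet> z) \<le> 1 / (3/4 * r^2)"
    using le pos pos' by (intro divide_left_mono) auto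
  ultimately show ?thesis
    by (simp add: bump_def exp_inv_poly_def)
qed

lemma integrable_bump: "0 \<le> r \<Longrightarrow> integrable lborel (bump r :: 'a::euclidean_space \<Rightarrow> real)"
proof -
  assume r: "0 \<le> r"
  have "integrable lborel (\<lambda>x::'a. indicator (cball 0 r) x *\<^sub>R bump r x)"
    by (rule borel_integrable_compact)
      (auto intro: continuous_on_subset[OF smooth_imp_continuous_on[OF smooth_bump]])
  moreover have "(\<lambda>x::'a. indicator (cball 0 r) x *\<^sub>R bump r x) = bump r"
    by (rule ext) (auto simp: indicator_def bump_eq_0[OF r])
  ultimately show ?thesis by simp
qed

lemma integral_bump_pos: "0 < r \<Longrightarrow> 0 < (LINT z|lborel. bump r (z::'a::euclidean_space))"
proof -
  assume r: "0 < r"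
  define m where "m = exp (- (1 / (3/4 * r^2)))"
  have "0 < m * measure lborel (ball (0::'a) (r/2))"
    using r by (simp add: m_def)
  also have "\<dots> = (LINT z|lborel. m * indicator (ball (0::'a) (r/2)) z)"
    by (simp add: integral_indicator)
  also have "\<dots> \<le> (LINT z|lborel. bump r (z::'a))"
  proof (rule integral_mono)
    show "integrable lborel (\<lambda>z::'a. m * indicator (ball 0 (r/2)) z)"
      using emeasure_bounded_finite[of "ball (0::'a) (r/2)"]
      by (intro integrable_mult_right integrable_real_indicator) auto
    show "integrable lborel (bump r :: 'a \<Rightarrow> real)"
      using r by (intro integrable_bump) simp
    show "m * indicator (ball 0 (r/2)) z \<le> bump r z" for z :: 'a
      using bump_lower_bound[OF r, of z] bump_nonneg[of r z] by (auto simp: m_def indicator_def)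
  qed
  finally show ?thesis .
qed

definition mollifier :: "real \<Rightarrow> 'a::euclidean_space \<Rightarrow> real" where
  "mollifier r z = bump r z / (LINT z|lborel. bump r (z::'a))"

lemma smooth_mollifier: "smooth (mollifier r)"
  using smooth_mult[OF smooth_bump smooth_const] by (simp add: mollifier_def[abs_def] divide_inverse)

lemma mollifier_nonneg: "0 < r \<Longrightarrow> mollifier r z \<ge> 0"
  using integral_bump_pos[of r, where 'a='a] bump_nonneg[of r z] by (simp add: mollifier_def)

lemma mollifier_eq_0: "0 < r \<Longrightarrow> r \<le> norm z \<Longrightarrow> mollifier r z = 0"
  by (simp add: mollifier_def bump_eq_0)

lemma tsupport_mollifier: "0 < r \<Longrightarrow> tsupport (mollifier r) \<subseteq> cball 0 r"
  unfolding tsupport_def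
  by (rule closure_minimal) (auto, meson mollifier_eq_0 nle_le)

lemma integrable_mollifier:
  "0 < r \<Longrightarrow> integrable lborel (mollifier r :: 'a::euclidean_space \<Rightarrow> real)"
  unfolding mollifier_def using integrable_bump[of r, where 'a='a] by simp

lemma integral_mollifier: "0 < r \<Longrightarrow> (LINT z|lborel. mollifier r (z::'a::euclidean_space)) = 1"
  unfolding mollifier_def using integral_bump_pos[of r, where 'a='a] by simp

lemma test_function_mollifier:
  assumes "0 < r"
  shows "test_function (mollifier r :: 'a::euclidean_space \<Rightarrow> real)"
proof -
  have "compact (tsupport (mollifier r :: 'a \<Rightarrow> real))"
    using bounded_subset[OF bounded_cball tsupport_mollifier[OF assms]]
    by (simp add: compact_eq_bounded_closed tsupport_def)
  then show ?thesis
    by (simp add: test_function_def smooth_mollifier)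
qed

lemma mollifier_measurable[measurable]: "mollifier r \<in> borel_measurable borel"
  by (intro borel_measurable_continuous_onI smooth_imp_continuous_on smooth_mollifier)

subsection \<open>Convolution with a push-forward measure\<close>

text \<open>The convolution of \<open>g\<close> with the push-forward under \<open>j\<close> of the measure \<open>\<phi> x dx\<close>
  on \<open>cbox a b\<close>; below the box always contains the support of \<open>\<phi>\<close>.\<close>
definition push_conv ::
  "('b::euclidean_space \<Rightarrow> real) \<Rightarrow> ('b \<Rightarrow> 'a::euclidean_space) \<Rightarrow> 'b \<Rightarrow> 'b \<Rightarrow> ('a \<Rightarrow> real) \<Rightarrow> 'a \<Rightarrow> real"
  where "push_conv \<phi> j a b g y = integral (cbox a b) (\<lambda>x. \<phi> x * g (y - j x))"

lemma smooth_imp_bounded_linear_frechet_derivative: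
  "smooth (g :: 'a::euclidean_space \<Rightarrow> real) \<Longrightarrow> bounded_linear (frechet_derivative g (at z))"
  using smooth_imp_differentiable_on
  by (auto simp: differentiable_on_def linear_conv_bounded_linear[symmetric]
      intro: linear_frechet_derivative)

lemma continuous_on_Blinfun_frechet_derivative:
  assumes "smooth (g :: 'a::euclidean_space \<Rightarrow> real)"
  shows "continuous_on UNIV (\<lambda>z. Blinfun (frechet_derivative g (at z)))"
proof (rule continuous_on_blinfun_componentwise)
  show "continuous_on UNIV (\<lambda>z. blinfun_apply (Blinfun (frechet_derivative g (at z))) i)" for i
    using smooth_imp_continuous_on[OF smooth_frechet_derivative[OF assms]]
    by (simp add: bounded_linear_Blinfun_apply smooth_imp_bounded_linear_frechet_derivative[OF assms])
qed

lemma continuous_on_push_conv_kernel_derivative: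
  fixes \<phi> :: "'b::euclidean_space \<Rightarrow> real" and j :: "'b \<Rightarrow> 'a::euclidean_space"
  assumes g: "smooth g" and j: "linear j" and \<phi>: "continuous_on UNIV \<phi>"
  shows "continuous_on (UNIV \<times> S) (\<lambda>(y, x). \<phi> x *\<^sub>R Blinfun (frechet_derivative g (at (y - j x))))"
  unfolding case_prod_unfold
  by (intro continuous_on_scaleR continuous_on_compose2[OF \<phi>]
      continuous_on_compose2[OF continuous_on_Blinfun_frechet_derivative[OF g]]
      continuous_intros continuous_on_compose2[OF linear_imp_continuous_on[OF j]]) auto

lemma continuous_on_push_conv_kernel:
  fixes \<phi> :: "'b::euclidean_space \<Rightarrow> real" and j :: "'b \<Rightarrow> 'a::euclidean_space"
  assumes "continuous_on UNIV \<phi>" "continuous_on UNIV g" "linear j"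
  shows "continuous_on S (\<lambda>x. \<phi> x * g (y - j x))"
proof -
  have "continuous_on UNIV (\<lambda>x. \<phi> x * g (y - j x))"
    by (intro continuous_intros assms(1) continuous_on_compose2[OF assms(2)]
        continuous_on_compose2[OF linear_imp_continuous_on[OF assms(3)]]) auto
  then show ?thesis
    by (rule continuous_on_subset) simp
qed

lemma push_conv_has_derivative:
  fixes \<phi> :: "'b::euclidean_space \<Rightarrow> real" and j :: "'b \<Rightarrow> 'a::euclidean_space"
  assumes g: "smooth g" and j: "linear j" and \<phi>: "continuous_on UNIV \<phi>"
  shows "(push_conv \<phi> j a b g has_derivative
    (\<lambda>v. push_conv \<phi> j a b (\<lambda>z. frechet_derivative g (at z) v) y)) (at y)"
proof -
  define fx where "fx = (\<lambda>y x. \<phi> x *\<^sub>R Blinfun (frechet_derivative g (at (y - j x))))"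
  have fx_apply: "blinfun_apply (fx y x) = (\<lambda>v. \<phi> x * frechet_derivative g (at (y - j x)) v)"
    for y x
    by (simp add: fx_def scaleR_blinfun.rep_eq bounded_linear_Blinfun_apply
        smooth_imp_bounded_linear_frechet_derivative[OF g])
  have cont_fx: "continuous_on (UNIV \<times> cbox a b) (\<lambda>(y, x). fx y x)"
    unfolding fx_def by (rule continuous_on_push_conv_kernel_derivative[OF g j \<phi>])
  have "((\<lambda>y. integral (cbox a b) (\<lambda>x. \<phi> x * g (y - j x))) has_derivative
      integral (cbox a b) (fx y)) (at y within UNIV)"
  proof (rule leibniz_rule[where fx = fx])
    fix y x
    have "((\<lambda>y. y - j x) has_derivative (\<lambda>v. v)) (at y)"
      by (auto intro!: derivative_eq_intros)
    from diff_chain_at[OF this has_derivative_frechet_derivative[OF smooth_imp_differentiable_on[OF g]]]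
    have "((\<lambda>y. g (y - j x)) has_derivative frechet_derivative g (at (y - j x))) (at y)"
      by (simp add: o_def)
    then show "((\<lambda>y. \<phi> x * g (y - j x)) has_derivative blinfun_apply (fx y x)) (at y within UNIV)"
      unfolding fx_apply by (rule has_derivative_mult_right)
  next
    show "(\<lambda>x. \<phi> x * g (y - j x)) integrable_on cbox a b" for y
      by (intro integrable_continuous continuous_on_push_conv_kernel \<phi> j
          smooth_imp_continuous_on[OF g])
  qed (use cont_fx in auto)
  moreover have "blinfun_apply (integral (cbox a b) (fx y)) =
      (\<lambda>v. push_conv \<phi> j a b (\<lambda>z. frechet_derivative g (at z) v) y)"
  proof -
    have "continuous_on (cbox a b) (\<lambda>x. (\<lambda>(y, x). fx y x) (y, x))"
      by (rule continuous_on_compose2[OF cont_fx]) (auto intro!: continuous_intros)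
    then have "continuous_on (cbox a b) (fx y)"
      by simp
    then show ?thesis
      by (auto simp: blinfun_apply_integral fx_apply push_conv_def integrable_continuous)
  qed
  ultimately show ?thesis
    unfolding push_conv_def[abs_def] by simp
qed

lemma smooth_push_conv:
  fixes \<phi> :: "'b::euclidean_space \<Rightarrow> real" and j :: "'b \<Rightarrow> 'a::euclidean_space"
  assumes g: "smooth g" and j: "linear j" and \<phi>: "continuous_on UNIV \<phi>"
  shows "smooth (push_conv \<phi> j a b g)"
proof (rule smooth_coinduct[where P = "\<lambda>f. \<exists>g. smooth g \<and> f = push_conv \<phi> j a b g"])
  fix f
  assume "\<exists>g. smooth g \<and> f = push_conv \<phi> j a b g"
  then obtain g where g: "smooth g" and f: "f = push_conv \<phi> j a b g" by blast
  note d = push_conv_has_derivative[OF g j \<phi>, of a b]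
  then have "(\<lambda>y. frechet_derivative f (at y) v) = push_conv \<phi> j a b (\<lambda>z. frechet_derivative g (at z) v)"
    for v
    unfolding f by (auto dest: frechet_derivative_apply)
  then show "f differentiable_on UNIV \<and>
      (\<forall>v. \<exists>g. smooth g \<and> (\<lambda>x. frechet_derivative f (at x) v) = push_conv \<phi> j a b g)"
    using d smooth_frechet_derivative[OF g] unfolding f
    by (auto simp: differentiable_on_def differentiable_def)
qed (use g in auto)

lemma push_conv_nonzero:
  assumes "push_conv \<phi> j a b g y \<noteq> 0"
  obtains x where "x \<in> cbox a b" "\<phi> x \<noteq> 0" "g (y - j x) \<noteq> 0"
proof -
  have "\<not> (\<forall>x\<in>cbox a b. \<phi> x * g (y - j x) = 0)"
    using assms integral_cong[of "cbox a b" "\<lambda>x. \<phi> x * g (y - j x)" "\<lambda>x. 0"]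
    by (auto simp: push_conv_def)
  then show ?thesis
    using that by auto
qed

lemma compact_linear_image_plus:
  fixes j :: "'b::euclidean_space \<Rightarrow> 'a::euclidean_space"
  assumes "linear j" "compact K" "compact L"
  shows "compact ((\<lambda>(x, z). j x + z) ` (K \<times> L))"
  using assms
  by (intro compact_continuous_image compact_Times)
    (auto simp: case_prod_unfold intro!: continuous_intros
      continuous_on_compose2[OF linear_imp_continuous_on[OF assms(1)]])

lemma tsupport_push_conv:
  fixes \<phi> :: "'b::euclidean_space \<Rightarrow> real" and j :: "'b \<Rightarrow> 'a::euclidean_space"
  assumes "linear j" "compact (tsupport \<phi>)" "compact L" "tsupport g \<subseteq> L"
  shows "tsupport (push_conv \<phi> j a b g) \<subseteq> (\<lambda>(x, z). j x + z) ` (tsupport \<phi> \<times> L)"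
  unfolding tsupport_def[of "push_conv \<phi> j a b g"]
proof (rule closure_minimal)
  show "closed ((\<lambda>(x, z). j x + z) ` (tsupport \<phi> \<times> L))"
    using assms by (intro compact_imp_closed compact_linear_image_plus)
  show "{y. push_conv \<phi> j a b g y \<noteq> 0} \<subseteq> (\<lambda>(x, z). j x + z) ` (tsupport \<phi> \<times> L)"
  proof
    fix y
    assume "y \<in> {y. push_conv \<phi> j a b g y \<noteq> 0}"
    then obtain x where "\<phi> x \<noteq> 0" "g (y - j x) \<noteq> 0"
      by (auto elim: push_conv_nonzero)
    then have "(x, y - j x) \<in> tsupport \<phi> \<times> L"
      using assms(4) by (auto dest: tsupport_nonzero)
    then show "y \<in> (\<lambda>(x, z). j x + z) ` (tsupport \<phi> \<times> L)"
      by (rule rev_image_eqI) simp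
  qed
qed

lemma test_function_push_conv:
  fixes \<phi> :: "'b::euclidean_space \<Rightarrow> real" and j :: "'b \<Rightarrow> 'a::euclidean_space"
  assumes j: "linear j" and \<phi>: "test_function \<phi>" and g: "test_function g"
  shows "test_function (push_conv \<phi> j a b g)"
proof -
  let ?S = "(\<lambda>(x, z). j x + z) ` (tsupport \<phi> \<times> tsupport g)"
  have "compact ?S"
    using j \<phi> g by (intro compact_linear_image_plus) (auto simp: test_function_def)
  moreover have "tsupport (push_conv \<phi> j a b g) \<subseteq> ?S"
    using j \<phi> g by (intro tsupport_push_conv) (auto simp: test_function_def)
  ultimately have "compact (tsupport (push_conv \<phi> j a b g))"
    by (metis closed_closure compact_Int_closed inf.absorb_iff2 tsupport_def)
  moreover have "smooth (push_conv \<phi> j a b g)"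
    using j \<phi> g by (intro smooth_push_conv smooth_imp_continuous_on) (auto simp: test_function_def)
  ultimately show ?thesis
    by (simp add: test_function_def)
qed

subsection \<open>Fourier transforms\<close>

lemma fourier_measurable:
  fixes f :: "'a::euclidean_space \<Rightarrow> complex"
  assumes [measurable]: "f \<in> borel_measurable borel"
  shows "fourier f \<in> borel_measurable borel"
  unfolding fourier_def[abs_def] by (rule lborel.borel_measurable_lebesgue_integral) measurable

lemma fourier_translate:
  fixes f :: "'a::euclidean_space \<Rightarrow> complex"
  assumes f[measurable]: "f \<in> borel_measurable borel"
  shows "fourier (\<lambda>y. f (y - t)) \<xi> = exp (\<i> * complex_of_real (\<xi> \<bullet> t)) * fourier f \<xi>"
proof -
  have "fourier (\<lambda>y. f (y - t)) \<xi> =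
      integral\<^sup>L (distr lborel borel ((+) t)) (\<lambda>y. exp (\<i> * complex_of_real (\<xi> \<bullet> y)) * f (y - t))"
    by (simp add: fourier_def lborel_distr_plus)
  also have "\<dots> = (LINT z|lborel. exp (\<i> * complex_of_real (\<xi> \<bullet> t)) *
      (exp (\<i> * complex_of_real (\<xi> \<bullet> z)) * f z))"
    by (subst integral_distr) (auto simp: inner_add_right distrib_left exp_add mult.assoc)
  also have "\<dots> = exp (\<i> * complex_of_real (\<xi> \<bullet> t)) * fourier f \<xi>"
    unfolding fourier_def by (rule integral_mult_right_zero)
  finally show ?thesis .
qed

lemma push_conv_eq_lebesgue_integral:
  fixes \<phi> :: "'b::euclidean_space \<Rightarrow> real" and j :: "'b \<Rightarrow> 'a::euclidean_space"
  assumes j: "linear j" and \<phi>: "continuous_on UNIV \<phi>" and g: "continuous_on UNIV g"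
    and ab: "tsupport \<phi> \<subseteq> cbox a b"
  shows "push_conv \<phi> j a b g y = (LINT x|lborel. \<phi> x * g (y - j x))"
proof -
  let ?f = "\<lambda>x. \<phi> x * g (y - j x)"
  have "set_integrable lborel (cbox a b) ?f"
    unfolding set_integrable_def
    by (intro borel_integrable_compact continuous_on_push_conv_kernel j \<phi> g) auto
  then have "push_conv \<phi> j a b g y = (LINT x:cbox a b|lborel. ?f x)"
    by (simp add: push_conv_def set_borel_integral_eq_integral(2))
  also have "\<dots> = (LINT x|lborel. ?f x)"
    unfolding set_lebesgue_integral_def
    using ab by (intro Bochner_Integration.integral_cong) (auto simp: indicator_def dest: tsupport_nonzero)
  finally show ?thesis .
qed

lemma integrable_push_conv_kernel:
  fixes \<phi> :: "'b::euclidean_space \<Rightarrow> real" and j :: "'b \<Rightarrow> 'a::euclidean_space"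
  assumes j: "linear j" and \<phi>: "continuous_on UNIV \<phi>" "compact (tsupport \<phi>)"
    and g: "continuous_on UNIV g" "compact (tsupport g)"
  shows "integrable (lborel \<Otimes>\<^sub>M lborel)
    (\<lambda>(x, y). exp (\<i> * complex_of_real (\<xi> \<bullet> y)) * complex_of_real (\<phi> x * g (y - j x)))"
    (is "integrable _ ?F")
proof -
  let ?K = "tsupport \<phi> \<times> (\<lambda>(x, z). j x + z) ` (tsupport \<phi> \<times> tsupport g)"
  have "continuous_on UNIV ?F"
    unfolding case_prod_unfold
    by (intro continuous_intros continuous_on_compose2[OF g(1)] continuous_on_compose2[OF \<phi>(1)]
        continuous_on_compose2[OF linear_imp_continuous_on[OF j]]) auto
  then have "integrable lborel (\<lambda>p. indicator ?K p *\<^sub>R ?F p)"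
    using j \<phi> g
    by (intro borel_integrable_compact compact_Times compact_linear_image_plus)
      (auto intro: continuous_on_subset)
  moreover have "indicator ?K p *\<^sub>R ?F p = ?F p" for p
  proof (cases "?F p = 0")
    case False
    obtain x y where p: "p = (x, y)"
      by (cases p)
    with False have "x \<in> tsupport \<phi>" "y - j x \<in> tsupport g"
      by (auto dest: tsupport_nonzero)
    then have "p \<in> ?K"
      unfolding p by (auto intro: rev_image_eqI[of "(x, y - j x)"])
    then show ?thesis
      by simp
  qed simp
  ultimately show ?thesis
    by (simp add: lborel_prod)
qed

lemma fourier_push_conv:
  fixes \<phi> :: "'b::euclidean_space \<Rightarrow> real" and j :: "'b \<Rightarrow> 'a::euclidean_space"
  assumes j: "linear j" and \<phi>: "continuous_on UNIV \<phi>" "compact (tsupport \<phi>)"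
    and g: "continuous_on UNIV g" "compact (tsupport g)"
    and ab: "tsupport \<phi> \<subseteq> cbox a b"
  shows "fourier (\<lambda>y. cnj (complex_of_real (push_conv \<phi> j a b g y))) \<xi> =
    fourier (\<lambda>x. cnj (complex_of_real (\<phi> x))) (adjoint j \<xi>) * fourier (\<lambda>z. complex_of_real (g z)) \<xi>"
proof -
  define F where
    "F = (\<lambda>x y. exp (\<i> * complex_of_real (\<xi> \<bullet> y)) * complex_of_real (\<phi> x * g (y - j x)))"
  have gm[measurable]: "g \<in> borel_measurable borel"
    using g(1) by (rule borel_measurable_continuous_onI)
  have inner_F: "(LINT y|lborel. F x y) =
      exp (\<i> * complex_of_real (adjoint j \<xi> \<bullet> x)) * complex_of_real (\<phi> x) *
      fourier (\<lambda>z. complex_of_real (g z)) \<xi>" for x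
  proof -
    have "(LINT y|lborel. F x y) =
        complex_of_real (\<phi> x) * fourier (\<lambda>y. complex_of_real (g (y - j x))) \<xi>"
      unfolding F_def fourier_def by (simp add: ac_simps)
    also have "\<dots> = complex_of_real (\<phi> x) *
        (exp (\<i> * complex_of_real (\<xi> \<bullet> j x)) * fourier (\<lambda>z. complex_of_real (g z)) \<xi>)"
      by (subst fourier_translate) auto
    finally show ?thesis
      by (simp add: adjoint_works[OF j] inner_commute ac_simps)
  qed
  have "fourier (\<lambda>y. cnj (complex_of_real (push_conv \<phi> j a b g y))) \<xi> =
      (LINT y|lborel. LINT x|lborel. F x y)"
    unfolding fourier_def F_def push_conv_eq_lebesgue_integral[OF j \<phi>(1) g(1) ab]
    by (simp del: of_real_mult)
  also have "\<dots> = (LINT x|lborel. LINT y|lborel. F x y)"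
    using integrable_push_conv_kernel[OF j \<phi> g, of \<xi>]
    by (intro lborel_pair.Fubini_integral) (simp add: F_def case_prod_unfold)
  also have "\<dots> = fourier (\<lambda>x. cnj (complex_of_real (\<phi> x))) (adjoint j \<xi>) *
      fourier (\<lambda>z. complex_of_real (g z)) \<xi>"
    unfolding inner_F by (simp add: fourier_def)
  finally show ?thesis .
qed

lemma norm_fourier_mollifier_le_1:
  assumes r: "0 < r"
  shows "norm (fourier (\<lambda>z. complex_of_real (mollifier r z)) \<xi>) \<le> 1"
proof -
  have "norm (fourier (\<lambda>z. complex_of_real (mollifier r z)) \<xi>) \<le>
      (LINT z|lborel. norm (exp (\<i> * complex_of_real (\<xi> \<bullet> z)) * complex_of_real (mollifier r z)))"
    unfolding fourier_def by (rule integral_norm_bound)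
  also have "\<dots> = (LINT z|lborel. mollifier r (z::'a))"
    by (simp add: norm_mult mollifier_nonneg[OF r])
  also have "\<dots> = 1"
    by (rule integral_mollifier[OF r])
  finally show ?thesis .
qed

lemma norm_iexp_minus_1_times_mollifier_le:
  assumes r: "0 < r"
  shows "norm ((exp (\<i> * complex_of_real (\<xi> \<bullet> z)) - 1) * complex_of_real (mollifier r z))
    \<le> (norm \<xi> * r) * mollifier r z"
proof (cases "r \<le> norm z")
  case False
  have "norm (exp (\<i> * complex_of_real (\<xi> \<bullet> z)) - 1) \<le> \<bar>\<xi> \<bullet> z\<bar>"
    using iexp_approx1[of "\<xi> \<bullet> z" 0] by simp
  also have "\<dots> \<le> norm \<xi> * r"
    using False by (intro order_trans[OF Cauchy_Schwarz_ineq2 mult_left_mono]) auto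
  finally show ?thesis
    using mollifier_nonneg[OF r, of z] by (simp add: norm_mult mult_right_mono)
qed (simp add: mollifier_eq_0[OF r])

lemma norm_fourier_mollifier_minus_1_le:
  assumes r: "0 < r"
  shows "norm (fourier (\<lambda>z. complex_of_real (mollifier r z)) \<xi> - 1) \<le> norm \<xi> * r"
proof -
  let ?e = "\<lambda>z. exp (\<i> * complex_of_real (\<xi> \<bullet> z))"
  have int: "integrable lborel (mollifier r :: 'a \<Rightarrow> real)"
    using integrable_mollifier[OF r] .
  have int_e: "integrable lborel (\<lambda>z::'a. ?e z * complex_of_real (mollifier r z))"
    by (rule Bochner_Integration.integrable_bound[OF int]) (auto simp: norm_mult)
  have "fourier (\<lambda>z. complex_of_real (mollifier r z)) \<xi> - 1 =
      (LINT z|lborel. ?e z * complex_of_real (mollifier r z)) - (LINT z|lborel. complex_of_real (mollifier r (z::'a)))"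
    using integral_mollifier[OF r, where 'a='a] by (simp add: fourier_def)
  also have "\<dots> = (LINT z|lborel. (?e z - 1) * complex_of_real (mollifier r z))"
    using int int_e by (simp add: Bochner_Integration.integral_diff[symmetric] algebra_simps)
  finally have "norm (fourier (\<lambda>z. complex_of_real (mollifier r z)) \<xi> - 1) \<le>
      (LINT z|lborel. norm ((?e z - 1) * complex_of_real (mollifier r z)))"
    by (simp add: integral_norm_bound)
  also have "\<dots> \<le> (LINT z|lborel. (norm \<xi> * r) * mollifier r (z::'a))"
  proof (rule integral_mono)
    show "integrable lborel (\<lambda>z. norm ((?e z - 1) * complex_of_real (mollifier r z)))"
      using Bochner_Integration.integrable_diff[OF int_e integrable_of_real[OF int]]
      by (intro integrable_norm) (simp add: algebra_simps)
    show "integrable lborel (\<lambda>z::'a. (norm \<xi> * r) * mollifier r z)"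
      using int by simp
  qed (rule norm_iexp_minus_1_times_mollifier_le[OF r])
  finally show ?thesis
    using integral_mollifier[OF r, where 'a='a] by simp
qed

lemma fourier_mollifier_tendsto_1:
  assumes e: "0 < e"
  shows "(\<lambda>n. fourier (\<lambda>z. complex_of_real (mollifier (e / Suc n) z)) \<xi>) \<longlonglongrightarrow> 1"
proof -
  have "(\<lambda>n. norm \<xi> * (e * inverse (Suc n))) \<longlonglongrightarrow> norm \<xi> * (e * 0)"
    by (intro tendsto_mult tendsto_const LIMSEQ_inverse_real_of_nat)
  then have bound: "(\<lambda>n. norm \<xi> * (e / Suc n)) \<longlonglongrightarrow> 0"
    by (simp add: divide_inverse)
  have "\<forall>\<^sub>F n in sequentially.
      norm (fourier (\<lambda>z. complex_of_real (mollifier (e / Suc n) z)) \<xi> - 1) \<le> norm \<xi> * (e / Suc n)"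
    using e by (intro always_eventually allI norm_fourier_mollifier_minus_1_le) simp
  from Lim_null_comparison[OF this bound] show ?thesis
    by (rule LIM_zero_cancel)
qed

subsection \<open>Supports of the imaginary parts\<close>

lemma meas_tilde_distr_adjoint:
  fixes \<mu> :: "'a::euclidean_space measure" and j :: "'b::euclidean_space \<Rightarrow> 'a"
  assumes j: "linear j" and sets_\<mu>: "sets \<mu> = sets borel"
    and \<phi>[measurable]: "\<phi> \<in> borel_measurable borel"
  shows "meas_tilde (distr \<mu> borel (adjoint j)) \<phi> =
    (LINT \<xi>|\<mu>. fourier (\<lambda>x. cnj (\<phi> x)) (adjoint j \<xi>))"
proof -
  have "adjoint j \<in> measurable \<mu> borel"
    using borel_measurable_continuous_onI[OF linear_imp_continuous_on[OF adjoint_linear[OF j]]]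
    by (simp add: measurable_cong_sets[OF sets_\<mu> refl])
  moreover have "fourier (\<lambda>x. cnj (\<phi> x)) \<in> borel_measurable borel"
    by (intro fourier_measurable measurable_compose[OF \<phi>] borel_measurable_continuous_onI
        continuous_intros)
  ultimately show ?thesis
    unfolding meas_tilde_def by (rule integral_distr)
qed

lemma meas_tilde_push_conv:
  fixes \<mu> :: "'a::euclidean_space measure" and j :: "'b::euclidean_space \<Rightarrow> 'a"
  assumes j: "linear j" and \<phi>: "test_function \<phi>" and g: "test_function g"
    and ab: "tsupport \<phi> \<subseteq> cbox a b"
  shows "meas_tilde \<mu> (\<lambda>y. complex_of_real (push_conv \<phi> j a b g y)) =
    (LINT \<xi>|\<mu>. fourier (\<lambda>x. cnj (complex_of_real (\<phi> x))) (adjoint j \<xi>) *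
      fourier (\<lambda>z. complex_of_real (g z)) \<xi>)"
proof -
  have "fourier (\<lambda>y. cnj (complex_of_real (push_conv \<phi> j a b g y))) \<xi> =
      fourier (\<lambda>x. cnj (complex_of_real (\<phi> x))) (adjoint j \<xi>) *
      fourier (\<lambda>z. complex_of_real (g z)) \<xi>" for \<xi>
    using j \<phi> g ab
    by (intro fourier_push_conv) (auto simp: test_function_def smooth_imp_continuous_on)
  then show ?thesis
    by (simp add: meas_tilde_def)
qed

lemma tendsto_meas_tilde_push_conv_mollifier:
  fixes \<mu> :: "'a::euclidean_space measure" and j :: "'b::euclidean_space \<Rightarrow> 'a"
  assumes j: "linear j" and sets_\<mu>: "sets \<mu> = sets borel"
    and \<phi>: "test_function \<phi>" and ab: "tsupport \<phi> \<subseteq> cbox a b" and e: "0 < e"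
    and int: "integrable \<mu> (\<lambda>\<xi>. fourier (\<lambda>x. cnj (complex_of_real (\<phi> x))) (adjoint j \<xi>))"
  shows "(\<lambda>n. meas_tilde \<mu> (\<lambda>y. complex_of_real (push_conv \<phi> j a b (mollifier (e / Suc n)) y)))
    \<longlonglongrightarrow> meas_tilde (distr \<mu> borel (adjoint j)) (\<lambda>x. complex_of_real (\<phi> x))"
proof -
  define G where "G = (\<lambda>\<xi>. fourier (\<lambda>x. cnj (complex_of_real (\<phi> x))) (adjoint j \<xi>))"
  define M where
    "M = (\<lambda>n \<xi>. fourier (\<lambda>z::'a. complex_of_real (mollifier (e / Suc n) z)) \<xi>)"
  have G[measurable]: "G \<in> borel_measurable \<mu>"
    using int unfolding G_def by (rule borel_measurable_integrable)
  have M[measurable]: "M n \<in> borel_measurable \<mu>" for n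
    unfolding M_def measurable_cong_sets[OF sets_\<mu> refl]
    by (rule fourier_measurable) measurable
  have "(\<lambda>n. LINT \<xi>|\<mu>. G \<xi> * M n \<xi>) \<longlonglongrightarrow> (LINT \<xi>|\<mu>. G \<xi>)"
  proof (rule integral_dominated_convergence[where w = "\<lambda>\<xi>. norm (G \<xi>)"])
    show "integrable \<mu> (\<lambda>\<xi>. norm (G \<xi>))"
      using int unfolding G_def by (rule integrable_norm)
    show "AE \<xi> in \<mu>. (\<lambda>n. G \<xi> * M n \<xi>) \<longlonglongrightarrow> G \<xi>"
      using tendsto_mult[OF tendsto_const fourier_mollifier_tendsto_1[OF e]]
      by (intro AE_I2) (simp add: M_def)
    show "AE \<xi> in \<mu>. norm (G \<xi> * M n \<xi>) \<le> norm (G \<xi>)" for n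
      using norm_fourier_mollifier_le_1[of "e / Suc n"] e
      by (intro AE_I2) (auto simp: M_def norm_mult intro!: mult_left_le)
  qed measurable
  moreover have "meas_tilde \<mu> (\<lambda>y. complex_of_real (push_conv \<phi> j a b (mollifier (e / Suc n)) y))
      = (LINT \<xi>|\<mu>. G \<xi> * M n \<xi>)" for n
    unfolding G_def M_def using e by (intro meas_tilde_push_conv j \<phi> ab test_function_mollifier) simp
  moreover have "meas_tilde (distr \<mu> borel (adjoint j)) (\<lambda>x. complex_of_real (\<phi> x)) =
      (LINT \<xi>|\<mu>. G \<xi>)"
    unfolding G_def
    using \<phi> by (intro meas_tilde_distr_adjoint j sets_\<mu> test_function_borel_measurable)
  ultimately show ?thesis
    by simp
qed

lemma tsupport_push_conv_mollifier_subset: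
  fixes \<phi> :: "'b::euclidean_space \<Rightarrow> real" and j :: "'b \<Rightarrow> 'a::euclidean_space"
  assumes j: "linear j" and K: "compact (tsupport \<phi>)" and r: "0 < r" "r \<le> e"
    and U: "(\<Union>y\<in>j ` tsupport \<phi>. cball y e) \<subseteq> U"
  shows "tsupport (push_conv \<phi> j a b (mollifier r)) \<subseteq> U"
proof -
  have "tsupport (push_conv \<phi> j a b (mollifier r)) \<subseteq> (\<lambda>(x, z). j x + z) ` (tsupport \<phi> \<times> cball 0 r)"
    using j K r by (intro tsupport_push_conv tsupport_mollifier) auto
  also have "\<dots> \<subseteq> U"
    using U r by (force simp: dist_norm)
  finally show ?thesis .
qed

lemma Im_tilde_distr_adjoint_eq_0:
  fixes \<mu> :: "'a::euclidean_space measure" and j :: "'b::euclidean_space \<Rightarrow> 'a"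
  assumes j: "linear j" and sets_\<mu>: "sets \<mu> = sets borel" and U: "open U"
    and vanish: "\<And>\<psi>. test_function \<psi> \<Longrightarrow> tsupport \<psi> \<subseteq> U \<Longrightarrow> Im_tilde \<mu> \<psi> = 0"
    and \<phi>: "test_function \<phi>" and supp: "j ` tsupport \<phi> \<subseteq> U"
  shows "Im_tilde (distr \<mu> borel (adjoint j)) \<phi> = 0"
proof -
  have K: "compact (tsupport \<phi>)"
    using \<phi> by (simp add: test_function_def)
  obtain a where ab: "tsupport \<phi> \<subseteq> cbox (-a) a"
    using bounded_subset_cbox_symmetric[OF compact_imp_bounded[OF K]] by blast
  obtain e where e: "0 < e" and e_U: "(\<Union>y\<in>j ` tsupport \<phi>. cball y e) \<subseteq> U"
    using compact_subset_open_imp_cball_epsilon_subset[OF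
        compact_continuous_image[OF linear_imp_continuous_on[OF j] K] U supp] .
  define \<psi> where "\<psi> = (\<lambda>n. push_conv \<phi> j (-a) a (mollifier (e / Suc n)))"
  have "Im_tilde \<mu> (\<psi> n) = 0" for n
    using e unfolding \<psi>_def
    by (intro vanish test_function_push_conv test_function_mollifier j \<phi>
        tsupport_push_conv_mollifier_subset[OF j K _ _ e_U]) (auto simp: field_simps)
  show ?thesis
  proof (cases "integrable \<mu> (\<lambda>\<xi>. fourier (\<lambda>x. cnj (complex_of_real (\<phi> x))) (adjoint j \<xi>))")
    case True
    from tendsto_Im[OF tendsto_meas_tilde_push_conv_mollifier[OF j sets_\<mu> \<phi> ab e True]]
    have "(\<lambda>n. Im_tilde \<mu> (\<psi> n)) \<longlonglongrightarrow> Im_tilde (distr \<mu> borel (adjoint j)) \<phi>"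
      by (simp add: Im_tilde_def \<psi>_def)
    with \<open>\<And>n. Im_tilde \<mu> (\<psi> n) = 0\<close> show ?thesis
      by (simp add: LIMSEQ_const_iff)
  next
    case False
    then show ?thesis
      using j sets_\<mu> test_function_borel_measurable[OF \<phi>]
      by (simp add: Im_tilde_def meas_tilde_distr_adjoint not_integrable_integral_eq)
  qed
qed

lemma notin_dist_support_iff:
  "x \<notin> dist_support T \<longleftrightarrow>
    (\<exists>U. open U \<and> x \<in> U \<and> (\<forall>\<phi>. test_function \<phi> \<and> tsupport \<phi> \<subseteq> U \<longrightarrow> T \<phi> = 0))"
  by (auto simp: dist_support_def)

theorem lemma6p9:
  fixes \<mu> :: "'a::euclidean_space measure"
    and j :: "'b::euclidean_space \<Rightarrow> 'a"
  assumes "linear j" and "inj j"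
    and "tempered_measure \<mu>"
    and "tempered_measure (distr \<mu> borel (adjoint j))"
  shows "j ` dist_support (Im_tilde (distr \<mu> borel (adjoint j)))
           \<subseteq> dist_support (Im_tilde \<mu>)"
proof -
  have sets_\<mu>: "sets \<mu> = sets borel"
    using assms(3) by (simp add: tempered_measure_def)
  have "y \<notin> dist_support (Im_tilde (distr \<mu> borel (adjoint j)))"
    if jy: "j y \<notin> dist_support (Im_tilde \<mu>)" for y
  proof -
    obtain U where U: "open U" "j y \<in> U"
      and vanish: "\<forall>\<psi>. test_function \<psi> \<and> tsupport \<psi> \<subseteq> U \<longrightarrow> Im_tilde \<mu> \<psi> = 0"
      using jy unfolding notin_dist_support_iff by blast
    have "open (j -` U)"
      using continuous_open_vimage[OF U(1)] linear_continuous_at \<open>linear j\<close>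
      by (metis linear_conv_bounded_linear)
    moreover have "\<forall>\<phi>. test_function \<phi> \<and> tsupport \<phi> \<subseteq> j -` U \<longrightarrow>
        Im_tilde (distr \<mu> borel (adjoint j)) \<phi> = 0"
      using Im_tilde_distr_adjoint_eq_0[OF \<open>linear j\<close> sets_\<mu> U(1)] vanish by blast
    ultimately show ?thesis
      unfolding notin_dist_support_iff using U(2) by (intro exI[of _ "j -` U"]) simp
  qed
  then show ?thesis
    by (auto intro: image_subsetI)
qed

end
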